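(* Let $T$ be the set of $(a_0,\dots,a_9)\in\mathbb{R}^{10}$ such that $P(x,a)=x^{11}-x^{10}+a_9x^9+\cdots+a_0$ satisfies $a_9,a_8,a_7,a_6<0$, $a_5,\dots,a_1>0$, $a_0<0$ and has exactly one positive and exactly eight negative roots, all simple. Suppose $T\ne\emptyset$, let $\Gamma$ be a connected component of $T$, $\bar\Gamma$ its closure, and let $H$ be the set of polynomials $P(x,a)$, $a\in\bar\Gamma$, all of whose roots are real. Then $H$ contains no polynomial having a double positive root, a simple positive root, and exactly two distinct negative roots of total multiplicity $8$, and which satisfies either $\{a_1=a_5=0\}$ or $\{a_1=a_6=0\}$. *)

theory Defs
  imports "HOL-Analysis.Analysis" "HOL-Computational_Algebra.Polynomial"
begin

definition coef :: "real^10 \<Rightarrow> nat \<Rightarrow> real" where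
  "coef a j = a $ (of_nat j :: 10)"

definition Pa :: "real^10 \<Rightarrow> real poly" where
  "Pa a = monom 1 11 - monom 1 10 + (\<Sum>j<10. monom (coef a j) j)"

definition all_roots_real :: "real poly \<Rightarrow> bool" where
  "all_roots_real p \<longleftrightarrow>
     (\<forall>z::complex. poly (map_poly complex_of_real p) z = 0 \<longrightarrow> z \<in> \<real>)"

definition Tset :: "(real^10) set" where
  "Tset = {a. coef a 9 < 0 \<and> coef a 8 < 0 \<and> coef a 7 < 0 \<and> coef a 6 < 0
            \<and> (\<forall>j\<in>{1..5}. coef a j > 0) \<and> coef a 0 < 0
            \<and> card {x::real. x > 0 \<and> poly (Pa a) x = 0} = 1
            \<and> card {x::real. x < 0 \<and> poly (Pa a) x = 0} = 8
            \<and> (\<forall>x::real. poly (Pa a) x = 0 \<longrightarrow> order x (Pa a) = 1)}"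

end

(*
  Counting multiplicities, the roots u (double), v, s, t account for all eleven roots of P,
  so P = (x - u)^2 (x - v) (x - s)^k (x - t)^l with k + l = 8. The reversed polynomial has the
  roots U = 1/u, V = 1/v, -a = 1/s, -b = 1/t, and the hypotheses become: a_1 = 0 says
  2U + V = k a + l b, the coefficient a_10 = -1 < 0 says 2/U + 1/V > k/a + l/b, and on the
  closure of T still a_4 >= 0 >= a_6. By Cauchy-Schwarz the first two conditions exclude U = V;
  if V < U they force a_4 < 0, and if U < V they force a_6 > 0. These two implications are
  checked by explicit positivity certificates for k <= 4, the other cases following by the
  symmetry (k, a) <-> (l, b).
*)
theory Submission
  imports Defs
begin

lemma prod_linear_powers_order_dvd:
  fixes p :: "'a::idom poly"
  assumes "finite R" "p \<noteq> 0"
  shows "(\<Prod>x\<in>R. [:-x,1:]^order x p) dvd p"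
  using assms(1)
proof (induction R rule: finite_induct)
  case empty
  show ?case by simp
next
  case (insert x R)
  from insert.IH obtain q where q: "p = (\<Prod>y\<in>R. [:-y,1:]^order y p) * q" by (elim dvdE)
  have "q \<noteq> 0" using q assms(2) by auto
  have "poly (\<Prod>y\<in>R. [:-y,1:]^order y p) x \<noteq> 0"
    using insert.hyps by (auto simp: poly_prod)
  moreover have "order x p = order x (\<Prod>y\<in>R. [:-y,1:]^order y p) + order x q"
    using order_mult[of "\<Prod>y\<in>R. [:-y,1:]^order y p" q x] q assms(2) by argo
  ultimately have "order x p = order x q" by (simp add: order_0I)
  then have "[:-x,1:]^order x p dvd q" by (simp add: order_1)
  then show ?case using insert.hyps by (subst q) (simp add: mult_dvd_mono)
qed

lemma monic_poly_eq_prod_linear_powers: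
  fixes p :: "'a::idom poly"
  assumes "finite R" and monic: "lead_coeff p = 1"
    and deg: "degree p = (\<Sum>x\<in>R. order x p)"
  shows "p = (\<Prod>x\<in>R. [:-x,1:]^order x p)"
proof -
  define P where "P = (\<Prod>x\<in>R. [:-x,1:]^order x p)"
  have "p \<noteq> 0" using monic by auto
  then obtain q where q: "p = P * q"
    using prod_linear_powers_order_dvd[OF assms(1) \<open>p \<noteq> 0\<close>] unfolding P_def by (elim dvdE)
  have "P \<noteq> 0" "q \<noteq> 0" using q \<open>p \<noteq> 0\<close> by auto
  have "degree P = degree p"
    unfolding P_def deg by (simp add: degree_prod_sum_eq degree_linear_power)
  then have "degree q = 0" using q \<open>P \<noteq> 0\<close> \<open>q \<noteq> 0\<close> by (simp add: degree_mult_eq)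
  moreover have "lead_coeff P = 1" unfolding P_def by (simp add: lead_coeff_prod lead_coeff_power)
  then have "lead_coeff q = 1" using monic q by (simp add: lead_coeff_mult)
  ultimately have "q = 1" by (metis degree_0_id one_pCons)
  then show ?thesis using q P_def by simp
qed

lemma reflect_poly_linear:
  fixes r :: "'a::field"
  assumes "r \<noteq> 0"
  shows "reflect_poly [:-r,1:] = smult (-r) [:-inverse r,1:]"
  using assms by (simp add: reflect_poly_def)

lemma reflect_poly_linear_power:
  fixes r :: "'a::field"
  assumes "r \<noteq> 0"
  shows "reflect_poly ([:-r,1:]^m) = smult ((-r)^m) ([:-inverse r,1:]^m)"
  by (simp only: reflect_poly_power reflect_poly_linear[OF assms] smult_power)

(* Up to a nonzero scalar, the reversed polynomial of P in the root configuration above. *)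
definition root_config_poly :: "nat \<Rightarrow> nat \<Rightarrow> real \<Rightarrow> real \<Rightarrow> real \<Rightarrow> real \<Rightarrow> real poly" where
  "root_config_poly k l U V a b = [:-U,1:]^2 * [:-V,1:] * [:a,1:]^k * [:b,1:]^l"

lemma root_config_poly_swap: "root_config_poly k l U V a b = root_config_poly l k U V b a"
  unfolding root_config_poly_def by (simp add: mult_ac)

lemma root_config_coeff_10:
  assumes "k + l = 8"
  shows "coeff (root_config_poly k l U V a b) 10 = real k * a + real l * b - 2*U - V"
proof -
  from assms consider "k = 0" "l = 8" | "k = 1" "l = 7" | "k = 2" "l = 6" | "k = 3" "l = 5"
    | "k = 4" "l = 4" | "k = 5" "l = 3" | "k = 6" "l = 2" | "k = 7" "l = 1" | "k = 8" "l = 0"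
    by force
  then show ?thesis
    by cases (hypsubst_thin; simp add: root_config_poly_def eval_nat_numeral; algebra)+
qed

lemma root_config_coeff_1:
  assumes "k + l = 8" "1 \<le> k" "1 \<le> l"
  shows "coeff (root_config_poly k l U V a b) 1
    = U * a^(k-1) * b^(l-1) * ((2*V + U)*a*b - U*V*(real k * b + real l * a))"
proof -
  from assms consider "k = 1" "l = 7" | "k = 2" "l = 6" | "k = 3" "l = 5" | "k = 4" "l = 4"
    | "k = 5" "l = 3" | "k = 6" "l = 2" | "k = 7" "l = 1"
    by force
  then show ?thesis
    by cases (hypsubst_thin; simp add: root_config_poly_def eval_nat_numeral; algebra)+
qed

lemma scaled_weighted_sum:
  fixes k l a b x S :: real
  assumes "k*a + l*b = S" "S \<noteq> 0"
  shows "k*(a*x/S) + l*(b*x/S) = x"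
proof -
  have "k*(a*x/S) + l*(b*x/S) = (k*a + l*b) * x / S" by (simp add: algebra_simps add_divide_distrib)
  then show ?thesis using assms by simp
qed

(* The certificates below write the relevant coefficient
   (times a power of w1 + w2 + w3 + w4) as lam * (2/U + 1/V - k/a - l/b) * U V a b + R,
   where lam and R have nonnegative coefficients in the w's (lam = 0 when R alone suffices). *)
lemma root_config_cone_below:
  fixes k l U V a b :: real
  assumes "0 < V" "V < U" "0 < a" "0 < b" and sum: "k*a + l*b = 2*U + V"
  obtains w1 w2 w3 w4 where "0 < w1" "0 < w2" "0 < w3" "0 < w4"
    "a = 3*w1 + 2*w2" "b = 3*w3 + 2*w4" "V = k*w1 + l*w3" "U = k*w1 + l*w3 + (k*w2 + l*w4)"
proof -
  define S where "S = 2*U + V"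
  have "0 < S" using assms unfolding S_def by simp
  have scaled: "k*(a*x/S) + l*(b*x/S) = x" for x
    using sum \<open>0 < S\<close> unfolding S_def by (intro scaled_weighted_sum) simp_all
  show thesis
  proof (rule that[of "a*V/S" "a*(U-V)/S" "b*V/S" "b*(U-V)/S"])
    show "a = 3*(a*V/S) + 2*(a*(U-V)/S)" "b = 3*(b*V/S) + 2*(b*(U-V)/S)"
      using \<open>0 < S\<close> by (simp_all add: field_simps) (simp_all add: S_def algebra_simps)
    show "V = k*(a*V/S) + l*(b*V/S)" by (rule scaled[symmetric])
    show "U = k*(a*V/S) + l*(b*V/S) + (k*(a*(U-V)/S) + l*(b*(U-V)/S))"
      unfolding scaled by simp
  qed (use assms \<open>0 < S\<close> in simp_all)
qed

lemma root_config_cone_above: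
  fixes k l U V a b :: real
  assumes "0 < U" "U < V" "0 < a" "0 < b" and sum: "k*a + l*b = 2*U + V"
  obtains w1 w2 w3 w4 where "0 < w1" "0 < w2" "0 < w3" "0 < w4"
    "a = 3*w1 + w2" "b = 3*w3 + w4" "U = k*w1 + l*w3" "V = k*w1 + l*w3 + (k*w2 + l*w4)"
proof -
  define S where "S = 2*U + V"
  have "0 < S" using assms unfolding S_def by simp
  have scaled: "k*(a*x/S) + l*(b*x/S) = x" for x
    using sum \<open>0 < S\<close> unfolding S_def by (intro scaled_weighted_sum) simp_all
  show thesis
  proof (rule that[of "a*U/S" "a*(V-U)/S" "b*U/S" "b*(V-U)/S"])
    show "a = 3*(a*U/S) + a*(V-U)/S" "b = 3*(b*U/S) + b*(V-U)/S"
      using \<open>0 < S\<close> by (simp_all add: field_simps) (simp_all add: S_def algebra_simps)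
    show "U = k*(a*U/S) + l*(b*U/S)" by (rule scaled[symmetric])
    show "V = k*(a*U/S) + l*(b*U/S) + (k*(a*(V-U)/S) + l*(b*(V-U)/S))"
      unfolding scaled by simp
  qed (use assms \<open>0 < S\<close> in simp_all)
qed

lemma root_config_1_7_coeff_7_pos:
  fixes U V a b :: real
  assumes "0 < V" "V < U" "0 < a" "0 < b" "a + 7*b = 2*U + V"
    and harmonic: "U*V*(b + 7*a) < (2*V + U)*a*b"
  shows "0 < coeff (root_config_poly 1 7 U V a b) 7"
proof -
  obtain w1 w2 w3 w4 where w: "0 < w1" "0 < w2" "0 < w3" "0 < w4"
    and ea: "a = 3*w1 + 2*w2" and eb: "b = 3*w3 + 2*w4"
    and eV: "V = 1*w1 + 7*w3" and eU: "U = 1*w1 + 7*w3 + (1*w2 + 7*w4)"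
    by (rule root_config_cone_below[where k=1 and l=7, OF assms(1-4)]) (use assms(5) in simp)
  have e7: "coeff (root_config_poly 1 7 U V a b) 7 = - (U^2*V*a) - 7*U^2*V*b + 7*U^2*a*b + 21*U^2*b^2 + 14*U*V*a*b + 42*U*V*b^2 - 42*U*a*b^2 - 70*U*b^3 - 21*V*a*b^2 - 35*V*b^3 + 35*a*b^3 + 35*b^4"
    unfolding root_config_poly_def by (simp add: eval_nat_numeral; algebra)
  have key: "coeff (root_config_poly 1 7 U V a b) 7 = ((1/7)*w1 + (1/7)*w2) * ((2*V + U)*a*b - U*V*(b + 7*a)) + ((1005/7)*w1^3*w3 + (621/7)*w1^3*w4 + (2059/7)*w1^2*w2*w3 + (1291/7)*w1^2*w2*w4 + 756*w1^2*w3^2 + 967*w1^2*w3*w4 + 325*w1^2*w4^2 + (1342/7)*w1*w2^2*w3 + (862/7)*w1*w2^2*w4 + 1049*w1*w2*w3^2 + 1231*w1*w2*w3*w4 + 398*w1*w2*w4^2 + 1197*w1*w3^3 + 2387*w1*w3^2*w4 + 1239*w1*w3*w4^2 + 196*w1*w4^3 + (288/7)*w2^3*w3 + (192/7)*w2^3*w4 + 349*w2^2*w3^2 + 404*w2^2*w3*w4 + 136*w2^2*w4^2 + 805*w2*w3^3 + 1407*w2*w3^2*w4 + 798*w2*w3*w4^2 + 196*w2*w4^3 + 3570*w3^4 + 9520*w3^3*w4 + 8834*w3^2*w4^2 + 3850*w3*w4^3 + 756*w4^4)"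
    unfolding e7 unfolding eU eV ea eb by algebra
  have lam: "0 < (1/7)*w1 + (1/7)*w2"
    by (intro add_pos_pos mult_pos_pos zero_less_power) (simp_all add: w)
  have rest: "0 \<le> (1005/7)*w1^3*w3 + (621/7)*w1^3*w4 + (2059/7)*w1^2*w2*w3 + (1291/7)*w1^2*w2*w4 + 756*w1^2*w3^2 + 967*w1^2*w3*w4 + 325*w1^2*w4^2 + (1342/7)*w1*w2^2*w3 + (862/7)*w1*w2^2*w4 + 1049*w1*w2*w3^2 + 1231*w1*w2*w3*w4 + 398*w1*w2*w4^2 + 1197*w1*w3^3 + 2387*w1*w3^2*w4 + 1239*w1*w3*w4^2 + 196*w1*w4^3 + (288/7)*w2^3*w3 + (192/7)*w2^3*w4 + 349*w2^2*w3^2 + 404*w2^2*w3*w4 + 136*w2^2*w4^2 + 805*w2*w3^3 + 1407*w2*w3^2*w4 + 798*w2*w3*w4^2 + 196*w2*w4^3 + 3570*w3^4 + 9520*w3^3*w4 + 8834*w3^2*w4^2 + 3850*w3*w4^3 + 756*w4^4"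
    by (intro add_nonneg_nonneg mult_nonneg_nonneg zero_le_power) (simp_all add: w less_imp_le)
  have "0 < (2*V + U)*a*b - U*V*(b + 7*a)" using harmonic by simp
  then show ?thesis unfolding key by (rule add_pos_nonneg[OF mult_pos_pos[OF lam] rest])
qed

lemma root_config_1_7_coeff_5_neg:
  fixes U V a b :: real
  assumes "0 < U" "U < V" "0 < a" "0 < b" "a + 7*b = 2*U + V"
    and harmonic: "U*V*(b + 7*a) < (2*V + U)*a*b"
  shows "coeff (root_config_poly 1 7 U V a b) 5 < 0"
proof -
  obtain w1 w2 w3 w4 where w: "0 < w1" "0 < w2" "0 < w3" "0 < w4"
    and ea: "a = 3*w1 + w2" and eb: "b = 3*w3 + w4"
    and eU: "U = 1*w1 + 7*w3" and eV: "V = 1*w1 + 7*w3 + (1*w2 + 7*w4)"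
    by (rule root_config_cone_above[where k=1 and l=7, OF assms(1-4)]) (use assms(5) in simp)
  have e5: "coeff (root_config_poly 1 7 U V a b) 5 = - (21*U^2*V*a*b^2) - 35*U^2*V*b^3 + 35*U^2*a*b^3 + 35*U^2*b^4 + 70*U*V*a*b^3 + 70*U*V*b^4 - 70*U*a*b^4 - 42*U*b^5 - 35*V*a*b^4 - 21*V*b^5 + 21*a*b^5 + 7*b^6"
    unfolding root_config_poly_def by (simp add: eval_nat_numeral; algebra)
  have key: "(- coeff (root_config_poly 1 7 U V a b) 5) * (w1+w2+w3+w4)^2 = ((1347012286147189699909717705/42004033056365454511289097)*w1^4*w4 + (6222490024881138787226852360/378036297507289090601601873)*w1^3*w2*w4 + (845387081179401687048068482/6000576150909350644469871)*w1^3*w3*w4 + (34042242036843948727032197/6000576150909350644469871)*w1^3*w4^2 + (1746469091745210105139373323/5861027868330063420179874)*w1^2*w2^2*w3 + (815003575961874595872401981/126012099169096363533867291)*w1^2*w2^2*w4 + (45063924467785147727885700529/36003456905456103866819226)*w1^2*w2*w3^2 + (45579200883808279181483119/54005185358184155800228839)*w1^2*w2*w4^2 + (1911730831997659806314695/857225164415621520638553)*w1^2*w4^3 + (145418746817462884283529790/157449519994705993586673)*w1*w2^2*w3^2 + (5231855279683458489910214/157449519994705993586673)*w1*w2^2*w3*w4 + (89426235786365598979948235/2204293279925883910213422)*w1*w2*w3^2*w4 + (47651546428323275497676837/7715026479740593685746977)*w1*w2*w4^3 + (3079207890543109849705256/857225164415621520638553)*w1*w3*w4^3 + (1210/49)*w1*w4^4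 + (1458/43)*w2^2*w3^3 + (143784/1849)*w2^2*w3^2*w4 + (63366749277588130824942556/1102146639962941955106711)*w2^2*w3*w4^2 + 10*w2^2*w4^3 + (1733808228439458815120931280/7715026479740593685746977)*w2*w3^3*w4 + (754183545498404263535795581/7715026479740593685746977)*w2*w3^2*w4^2 + (66936170876460472338016517717/162015556074552467400686517)*w2*w3*w4^3 + (1651/49)*w2*w4^4 + 819*w3^5 + (26410911031285399441339919/857225164415621520638553)*w3^4*w4 + (3853315131405166000772004608/2571675493246864561915659)*w3^3*w4^2 + (11153896408029218323291995937/6000576150909350644469871)*w3^2*w4^3 + (2020/7)*w3*w4^4 + 15*w4^5) * ((2*V + U)*a*b - U*V*(b + 7*a)) + ((1347012286147189699909717705/2000192050303116881489957)*w1^7*w4 + (74374210826071146797818820/59806406819694524695713)*w1^6*w2*w4 + 567*w1^6*w3^2 + (167947580896139802925652375290/14001344352121818170429699)*w1^6*w3*w4 + (194885171436426452384535707065/42004033056365454511289097)*w1^6*w4^2 + (1746469091745210105139373323/279096565158574448579994)*w1^5*w2^2*w3 + (44348102858506133810946486614/54005185358184155800228839)*w1^5*w2^2*w4 + (48304235589276197075899430869/1714450328831243041277106)*w1^5*w2*w3^2 + (234328455182382096880832956099/14001344352121818170429699)*w1^5*w2*w3*w4 + (1508111927006234542311717518516/378036297507289090601601873)*w1^5*w2*w4^2 + 5481*w1^5*w3^3 + (145134551142068659220387168799/2000192050303116881489957)*w1^5*w3^2*w4 + (103021362803351036498984731538/2000192050303116881489957)*w1^5*w3*w4^2 + (3492938183490420210278746646/418644847737861672869991)*w1^4*w2^3*w3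 + (16002532936423633937695676132/54005185358184155800228839)*w1^4*w2^3*w4 + (5761455331366832795438318996125/42004033056365454511289097)*w1^4*w2^2*w3^2 + (38845575096993101231246950775987/756072595014578181203203746)*w1^4*w2^2*w3*w4 + (689943660128890437096513216344/378036297507289090601601873)*w1^4*w2^2*w4^2 + (707335879709882210438218463394/2000192050303116881489957)*w1^4*w2*w3^3 + (1469798580157002298350665805388/6000576150909350644469871)*w1^4*w2*w3^2*w4 + (1917461088550898086656709171765/54005185358184155800228839)*w1^4*w2*w3*w4^2 + 10395*w1^4*w3^4 + (42685829714365949382353308561/285741721471873840212851)*w1^4*w3^3*w4 + (39728374983029127427356578487/285741721471873840212851)*w1^4*w3^2*w4^2 + (1746469091745210105139373323/837289695475723345739982)*w1^3*w2^4*w3 + (815003575961874595872401981/18001728452728051933409613)*w1^3*w2^4*w4 + (38412146789081966415064153267687/378036297507289090601601873)*w1^3*w2^3*w3^2 + (12127949125421780095619449600673/756072595014578181203203746)*w1^3*w2^3*w3*w4 + (45888804707591109604515415924/126012099169096363533867291)*w1^3*w2^3*w4^2 + (28990072639338190071931653682661/36003456905456103866819226)*w1^3*w2^2*w3^3 + (25904129439700855050946771160284/54005185358184155800228839)*w1^3*w2^2*w3^2*w4 + (851316419401981011261539750797/108010370716368311600457678)*w1^3*w2^2*w3*w4^2 + (45928007433516094220689361953/40820245924553405744693)*w1^3*w2*w3^4 + (6077010005191887152856191309111/5143350986493729123831318)*w1^3*w2*w3^3*w4 + (1753363321538877898634512228/857225164415621520638553)*w1^3*w4^5 + (14718667527890633121762079691735/756072595014578181203203746)*w1^2*w2^4*w3^2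 + (15405313635508031560283499578/378036297507289090601601873)*w1^2*w2^4*w3*w4 + (1016246930627274442466409149/126012099169096363533867291)*w1^2*w2^4*w4^2 + (2737390718857538178131835581918/7715026479740593685746977)*w1^2*w2^3*w3^3 + (1039328266240032065767887695329/7715026479740593685746977)*w1^2*w2^3*w3^2*w4 + (3230588429334048401850006426740/2571675493246864561915659)*w1^2*w2^2*w3^4 + (9965530878683413063997580512585/7715026479740593685746977)*w1^2*w2^2*w3^3*w4 + (30690140236148674979219427074/3306439919888825865320133)*w1^2*w2^2*w3*w4^3 + (5232674817663207559852749848/7715026479740593685746977)*w1^2*w2^2*w4^4 + (39061633866546965840374552423/244921475547320434468158)*w1^2*w2*w3^5 + (597162526460651061101319445316/2571675493246864561915659)*w1^2*w2*w3^4*w4 + (2248391146472651315277307846175/36003456905456103866819226)*w1^2*w2*w3^2*w4^3 + (9415233971297892409333491978866/162015556074552467400686517)*w1^2*w2*w3*w4^4 + (28858056143782494310776670046/7715026479740593685746977)*w1^2*w2*w4^5 + 184086*w1^2*w3^6 + (5095242989177621791665444273/285741721471873840212851)*w1^2*w3^5*w4 + (19384408041473603282045224394/122460737773660217234079)*w1^2*w3^4*w4^2 + (8339413527709332693469578408581/18001728452728051933409613)*w1^2*w3^3*w4^3 + (523258718848216414179590904013/2000192050303116881489957)*w1^2*w3^2*w4^4 + (48344581066678363932456079/949308044757055947551)*w1^2*w3*w4^5 + (5850/7)*w1^2*w4^6 + (149056009552483907436618568/3661616744062930083411)*w1*w2^4*w3^3 + (1045369339909181334301371916/3661616744062930083411)*w1*w2^3*w3^4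 + (207923282937497348890480284331/734764426641961303404474)*w1*w2^3*w3^3*w4 + (73732405253419598054560054610/23145079439221781057240931)*w1*w2^3*w3*w4^3 + (1647190744924764680028356417/7715026479740593685746977)*w1*w2^3*w4^4 + (6912906817811667294599699995/52483173331568664528891)*w1*w2^2*w3^5 + (3418010906893609351889880313691/15430052959481187371493954)*w1*w2^2*w3^4*w4 + (36722901205160866428889504223/734764426641961303404474)*w1*w2^2*w3^3*w4^2 + (14411167597292637536273411908144/162015556074552467400686517)*w1*w2^2*w3^2*w4^3 + (4018854975034690686120215079226/162015556074552467400686517)*w1*w2^2*w3*w4^4 + (7989610408832404376421392495/7715026479740593685746977)*w1*w2^2*w4^5 + 137151*w1*w2*w3^6 + (362907956244254723728186077053/5143350986493729123831318)*w1*w2*w3^5*w4 + (64920823323742887314377515353/367382213320980651702237)*w1*w2*w3^4*w4^2 + (56086682840497136246745286389845/108010370716368311600457678)*w1*w2*w3^3*w4^3 + (65682960166726782134345373587239/162015556074552467400686517)*w1*w2*w3^2*w4^4 + (601446692460276354447898660034/23145079439221781057240931)*w1*w2*w3*w4^5 + 717444*w1*w3^7 + (4158890387039870713033698207/5831463703507629392099)*w1*w3^6*w4 + (134959415809182444463949509387/122460737773660217234079)*w1*w3^5*w4^2 + (942883381993328999458630310626/367382213320980651702237)*w1*w3^4*w4^3 + (4060935066364796157767667085997/2571675493246864561915659)*w1*w3^3*w4^4 + (39595762582502127208723913307/285741721471873840212851)*w1*w3^2*w4^5 + 324*w2^4*w3^4 + (910056866495803153022741455/1102146639962941955106711)*w2^4*w3^2*w4^2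 + (270039291831482842188530848/1102146639962941955106711)*w2^4*w3*w4^3 + 15*w2^4*w4^4 + (558253495991543237701996552/179419220459083574087139)*w2^3*w3^4*w4 + (3555086019630891817313662741142/162015556074552467400686517)*w2^3*w3^2*w4^3 + (384402723236951650951661437322/162015556074552467400686517)*w2^3*w3*w4^4 + (5273/49)*w2^3*w4^5 + (1403577/43)*w2^2*w3^6 + (163156596615168543976511681443/7715026479740593685746977)*w2^2*w3^5*w4 + (15637361832559857052691792418713/162015556074552467400686517)*w2^2*w3^3*w4^3 + (16440450106833218798196500809918/162015556074552467400686517)*w2^2*w3^2*w4^4 + (81793508461747611215337959624/23145079439221781057240931)*w2^2*w3*w4^5 + (1143/7)*w2^2*w4^6 + 257481*w2*w3^7 + (105554879061245534765389349170/367382213320980651702237)*w2*w3^6*w4 + (385283339838313495618264408861/1102146639962941955106711)*w2*w3^5*w4^2 + (5993569685567492614480236883033/7715026479740593685746977)*w2*w3^4*w4^3 + (11600114796297998023859527991309/23145079439221781057240931)*w2*w3^3*w4^4 + (1026899088740300171585808810278/23145079439221781057240931)*w2*w3^2*w4^5 + 621*w2*w3*w4^6 + 315*w2*w4^7 + 129843*w3^8 + (1182930118565732490999981995/5831463703507629392099)*w3^7*w4 + (4683069117985960463042473411/17494391110522888176297)*w3^6*w4^2 + (163133846968267823054270970326/367382213320980651702237)*w3^5*w4^3 + (116149959498488744444432986670/367382213320980651702237)*w3^4*w4^4 + (8183611213329089754279409792/122460737773660217234079)*w3^3*w4^5 + 105*w3*w4^7 + 140*w4^8)"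
    unfolding e5 unfolding eU eV ea eb by algebra
  have lam: "0 < (1347012286147189699909717705/42004033056365454511289097)*w1^4*w4 + (6222490024881138787226852360/378036297507289090601601873)*w1^3*w2*w4 + (845387081179401687048068482/6000576150909350644469871)*w1^3*w3*w4 + (34042242036843948727032197/6000576150909350644469871)*w1^3*w4^2 + (1746469091745210105139373323/5861027868330063420179874)*w1^2*w2^2*w3 + (815003575961874595872401981/126012099169096363533867291)*w1^2*w2^2*w4 + (45063924467785147727885700529/36003456905456103866819226)*w1^2*w2*w3^2 + (45579200883808279181483119/54005185358184155800228839)*w1^2*w2*w4^2 + (1911730831997659806314695/857225164415621520638553)*w1^2*w4^3 + (145418746817462884283529790/157449519994705993586673)*w1*w2^2*w3^2 + (5231855279683458489910214/157449519994705993586673)*w1*w2^2*w3*w4 + (89426235786365598979948235/2204293279925883910213422)*w1*w2*w3^2*w4 + (47651546428323275497676837/7715026479740593685746977)*w1*w2*w4^3 + (3079207890543109849705256/857225164415621520638553)*w1*w3*w4^3 + (1210/49)*w1*w4^4 + (1458/43)*w2^2*w3^3 + (143784/1849)*w2^2*w3^2*w4 + (63366749277588130824942556/1102146639962941955106711)*w2^2*w3*w4^2 + 10*w2^2*w4^3 + (1733808228439458815120931280/7715026479740593685746977)*w2*w3^3*w4 + (754183545498404263535795581/7715026479740593685746977)*w2*w3^2*w4^2 + (66936170876460472338016517717/162015556074552467400686517)*w2*w3*w4^3 + (1651/49)*w2*w4^4 + 819*w3^5 + (26410911031285399441339919/857225164415621520638553)*w3^4*w4 + (3853315131405166000772004608/2571675493246864561915659)*w3^3*w4^2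 + (11153896408029218323291995937/6000576150909350644469871)*w3^2*w4^3 + (2020/7)*w3*w4^4 + 15*w4^5"
    by (intro add_pos_pos mult_pos_pos zero_less_power) (simp_all add: w)
  have rest: "0 \<le> (1347012286147189699909717705/2000192050303116881489957)*w1^7*w4 + (74374210826071146797818820/59806406819694524695713)*w1^6*w2*w4 + 567*w1^6*w3^2 + (167947580896139802925652375290/14001344352121818170429699)*w1^6*w3*w4 + (194885171436426452384535707065/42004033056365454511289097)*w1^6*w4^2 + (1746469091745210105139373323/279096565158574448579994)*w1^5*w2^2*w3 + (44348102858506133810946486614/54005185358184155800228839)*w1^5*w2^2*w4 + (48304235589276197075899430869/1714450328831243041277106)*w1^5*w2*w3^2 + (234328455182382096880832956099/14001344352121818170429699)*w1^5*w2*w3*w4 + (1508111927006234542311717518516/378036297507289090601601873)*w1^5*w2*w4^2 + 5481*w1^5*w3^3 + (145134551142068659220387168799/2000192050303116881489957)*w1^5*w3^2*w4 + (103021362803351036498984731538/2000192050303116881489957)*w1^5*w3*w4^2 + (3492938183490420210278746646/418644847737861672869991)*w1^4*w2^3*w3 + (16002532936423633937695676132/54005185358184155800228839)*w1^4*w2^3*w4 + (5761455331366832795438318996125/42004033056365454511289097)*w1^4*w2^2*w3^2 + (38845575096993101231246950775987/756072595014578181203203746)*w1^4*w2^2*w3*w4 + (689943660128890437096513216344/378036297507289090601601873)*w1^4*w2^2*w4^2 + (707335879709882210438218463394/2000192050303116881489957)*w1^4*w2*w3^3 + (1469798580157002298350665805388/6000576150909350644469871)*w1^4*w2*w3^2*w4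 + (1917461088550898086656709171765/54005185358184155800228839)*w1^4*w2*w3*w4^2 + 10395*w1^4*w3^4 + (42685829714365949382353308561/285741721471873840212851)*w1^4*w3^3*w4 + (39728374983029127427356578487/285741721471873840212851)*w1^4*w3^2*w4^2 + (1746469091745210105139373323/837289695475723345739982)*w1^3*w2^4*w3 + (815003575961874595872401981/18001728452728051933409613)*w1^3*w2^4*w4 + (38412146789081966415064153267687/378036297507289090601601873)*w1^3*w2^3*w3^2 + (12127949125421780095619449600673/756072595014578181203203746)*w1^3*w2^3*w3*w4 + (45888804707591109604515415924/126012099169096363533867291)*w1^3*w2^3*w4^2 + (28990072639338190071931653682661/36003456905456103866819226)*w1^3*w2^2*w3^3 + (25904129439700855050946771160284/54005185358184155800228839)*w1^3*w2^2*w3^2*w4 + (851316419401981011261539750797/108010370716368311600457678)*w1^3*w2^2*w3*w4^2 + (45928007433516094220689361953/40820245924553405744693)*w1^3*w2*w3^4 + (6077010005191887152856191309111/5143350986493729123831318)*w1^3*w2*w3^3*w4 + (1753363321538877898634512228/857225164415621520638553)*w1^3*w4^5 + (14718667527890633121762079691735/756072595014578181203203746)*w1^2*w2^4*w3^2 + (15405313635508031560283499578/378036297507289090601601873)*w1^2*w2^4*w3*w4 + (1016246930627274442466409149/126012099169096363533867291)*w1^2*w2^4*w4^2 + (2737390718857538178131835581918/7715026479740593685746977)*w1^2*w2^3*w3^3 + (1039328266240032065767887695329/7715026479740593685746977)*w1^2*w2^3*w3^2*w4 + (3230588429334048401850006426740/2571675493246864561915659)*w1^2*w2^2*w3^4 +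 (9965530878683413063997580512585/7715026479740593685746977)*w1^2*w2^2*w3^3*w4 + (30690140236148674979219427074/3306439919888825865320133)*w1^2*w2^2*w3*w4^3 + (5232674817663207559852749848/7715026479740593685746977)*w1^2*w2^2*w4^4 + (39061633866546965840374552423/244921475547320434468158)*w1^2*w2*w3^5 + (597162526460651061101319445316/2571675493246864561915659)*w1^2*w2*w3^4*w4 + (2248391146472651315277307846175/36003456905456103866819226)*w1^2*w2*w3^2*w4^3 + (9415233971297892409333491978866/162015556074552467400686517)*w1^2*w2*w3*w4^4 + (28858056143782494310776670046/7715026479740593685746977)*w1^2*w2*w4^5 + 184086*w1^2*w3^6 + (5095242989177621791665444273/285741721471873840212851)*w1^2*w3^5*w4 + (19384408041473603282045224394/122460737773660217234079)*w1^2*w3^4*w4^2 + (8339413527709332693469578408581/18001728452728051933409613)*w1^2*w3^3*w4^3 + (523258718848216414179590904013/2000192050303116881489957)*w1^2*w3^2*w4^4 + (48344581066678363932456079/949308044757055947551)*w1^2*w3*w4^5 + (5850/7)*w1^2*w4^6 + (149056009552483907436618568/3661616744062930083411)*w1*w2^4*w3^3 + (1045369339909181334301371916/3661616744062930083411)*w1*w2^3*w3^4 + (207923282937497348890480284331/734764426641961303404474)*w1*w2^3*w3^3*w4 + (73732405253419598054560054610/23145079439221781057240931)*w1*w2^3*w3*w4^3 + (1647190744924764680028356417/7715026479740593685746977)*w1*w2^3*w4^4 + (6912906817811667294599699995/52483173331568664528891)*w1*w2^2*w3^5 + (3418010906893609351889880313691/15430052959481187371493954)*w1*w2^2*w3^4*w4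 + (36722901205160866428889504223/734764426641961303404474)*w1*w2^2*w3^3*w4^2 + (14411167597292637536273411908144/162015556074552467400686517)*w1*w2^2*w3^2*w4^3 + (4018854975034690686120215079226/162015556074552467400686517)*w1*w2^2*w3*w4^4 + (7989610408832404376421392495/7715026479740593685746977)*w1*w2^2*w4^5 + 137151*w1*w2*w3^6 + (362907956244254723728186077053/5143350986493729123831318)*w1*w2*w3^5*w4 + (64920823323742887314377515353/367382213320980651702237)*w1*w2*w3^4*w4^2 + (56086682840497136246745286389845/108010370716368311600457678)*w1*w2*w3^3*w4^3 + (65682960166726782134345373587239/162015556074552467400686517)*w1*w2*w3^2*w4^4 + (601446692460276354447898660034/23145079439221781057240931)*w1*w2*w3*w4^5 + 717444*w1*w3^7 + (4158890387039870713033698207/5831463703507629392099)*w1*w3^6*w4 + (134959415809182444463949509387/122460737773660217234079)*w1*w3^5*w4^2 + (942883381993328999458630310626/367382213320980651702237)*w1*w3^4*w4^3 + (4060935066364796157767667085997/2571675493246864561915659)*w1*w3^3*w4^4 + (39595762582502127208723913307/285741721471873840212851)*w1*w3^2*w4^5 + 324*w2^4*w3^4 + (910056866495803153022741455/1102146639962941955106711)*w2^4*w3^2*w4^2 + (270039291831482842188530848/1102146639962941955106711)*w2^4*w3*w4^3 + 15*w2^4*w4^4 + (558253495991543237701996552/179419220459083574087139)*w2^3*w3^4*w4 + (3555086019630891817313662741142/162015556074552467400686517)*w2^3*w3^2*w4^3 + (384402723236951650951661437322/162015556074552467400686517)*w2^3*w3*w4^4 + (5273/49)*w2^3*w4^5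 + (1403577/43)*w2^2*w3^6 + (163156596615168543976511681443/7715026479740593685746977)*w2^2*w3^5*w4 + (15637361832559857052691792418713/162015556074552467400686517)*w2^2*w3^3*w4^3 + (16440450106833218798196500809918/162015556074552467400686517)*w2^2*w3^2*w4^4 + (81793508461747611215337959624/23145079439221781057240931)*w2^2*w3*w4^5 + (1143/7)*w2^2*w4^6 + 257481*w2*w3^7 + (105554879061245534765389349170/367382213320980651702237)*w2*w3^6*w4 + (385283339838313495618264408861/1102146639962941955106711)*w2*w3^5*w4^2 + (5993569685567492614480236883033/7715026479740593685746977)*w2*w3^4*w4^3 + (11600114796297998023859527991309/23145079439221781057240931)*w2*w3^3*w4^4 + (1026899088740300171585808810278/23145079439221781057240931)*w2*w3^2*w4^5 + 621*w2*w3*w4^6 + 315*w2*w4^7 + 129843*w3^8 + (1182930118565732490999981995/5831463703507629392099)*w3^7*w4 + (4683069117985960463042473411/17494391110522888176297)*w3^6*w4^2 + (163133846968267823054270970326/367382213320980651702237)*w3^5*w4^3 + (116149959498488744444432986670/367382213320980651702237)*w3^4*w4^4 + (8183611213329089754279409792/122460737773660217234079)*w3^3*w4^5 + 105*w3*w4^7 + 140*w4^8"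
    by (intro add_nonneg_nonneg mult_nonneg_nonneg zero_le_power) (simp_all add: w less_imp_le)
  have "0 < (2*V + U)*a*b - U*V*(b + 7*a)" using harmonic by simp
  then have "0 < (- coeff (root_config_poly 1 7 U V a b) 5) * (w1+w2+w3+w4)^2"
    unfolding key by (rule add_pos_nonneg[OF mult_pos_pos[OF lam] rest])
  moreover have "0 < (w1+w2+w3+w4)^2" using w by simp
  ultimately have "0 < - coeff (root_config_poly 1 7 U V a b) 5" by (rule zero_less_mult_pos2)
  then show ?thesis by simp
qed

lemma root_config_2_6_coeff_7_pos:
  fixes U V a b :: real
  assumes "0 < V" "V < U" "0 < a" "0 < b" "2*a + 6*b = 2*U + V"
  shows "0 < coeff (root_config_poly 2 6 U V a b) 7"
proof -
  obtain w1 w2 w3 w4 where w: "0 < w1" "0 < w2" "0 < w3" "0 < w4"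
    and ea: "a = 3*w1 + 2*w2" and eb: "b = 3*w3 + 2*w4"
    and eV: "V = 2*w1 + 6*w3" and eU: "U = 2*w1 + 6*w3 + (2*w2 + 6*w4)"
    by (rule root_config_cone_below[where k=2 and l=6, OF assms(1-4)]) (use assms(5) in simp)
  have e7: "coeff (root_config_poly 2 6 U V a b) 7 = - (2*U^2*V*a) - 6*U^2*V*b + U^2*a^2 + 12*U^2*a*b + 15*U^2*b^2 + 2*U*V*a^2 + 24*U*V*a*b + 30*U*V*b^2 - 12*U*a^2*b - 60*U*a*b^2 - 40*U*b^3 - 6*V*a^2*b - 30*V*a*b^2 - 20*V*b^3 + 15*a^2*b^2 + 40*a*b^3 + 15*b^4"
    unfolding root_config_poly_def by (simp add: eval_nat_numeral; algebra)
  have key: "coeff (root_config_poly 2 6 U V a b) 7 = 60*w1^4 + 160*w1^3*w2 + 396*w1^3*w3 + 264*w1^3*w4 + 164*w1^2*w2^2 + 792*w1^2*w2*w3 + 552*w1^2*w2*w4 + 1215*w1^2*w3^2 + 1620*w1^2*w3*w4 + 576*w1^2*w4^2 + 80*w1*w2^3 + 480*w1*w2^2*w3 + 384*w1*w2^2*w4 + 1620*w1*w2*w3^2 + 1872*w1*w2*w3*w4 + 672*w1*w2*w4^2 + 1620*w1*w3^3 + 3240*w1*w3^2*w4 + 1728*w1*w3*w4^2 + 288*w1*w4^3 + 16*w2^4 + 96*w2^3*w3 + 96*w2^3*w4 + 504*w2^2*w3^2 + 576*w2^2*w3*w4 + 240*w2^2*w4^2 + 1080*w2*w3^3 + 1944*w2*w3^2*w4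 + 1152*w2*w3*w4^2 + 288*w2*w4^3 + 2187*w3^4 + 5832*w3^3*w4 + 5508*w3^2*w4^2 + 2448*w3*w4^3 + 480*w4^4"
    unfolding e7 unfolding eU eV ea eb by algebra
  show ?thesis unfolding key
    by (intro add_pos_pos mult_pos_pos zero_less_power) (simp_all add: w)
qed

lemma root_config_2_6_coeff_5_neg:
  fixes U V a b :: real
  assumes "0 < U" "U < V" "0 < a" "0 < b" "2*a + 6*b = 2*U + V"
    and harmonic: "U*V*(2*b + 6*a) < (2*V + U)*a*b"
  shows "coeff (root_config_poly 2 6 U V a b) 5 < 0"
proof -
  obtain w1 w2 w3 w4 where w: "0 < w1" "0 < w2" "0 < w3" "0 < w4"
    and ea: "a = 3*w1 + w2" and eb: "b = 3*w3 + w4"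
    and eU: "U = 2*w1 + 6*w3" and eV: "V = 2*w1 + 6*w3 + (2*w2 + 6*w4)"
    by (rule root_config_cone_above[where k=2 and l=6, OF assms(1-4)]) (use assms(5) in simp)
  have e5: "coeff (root_config_poly 2 6 U V a b) 5 = - (6*U^2*V*a^2*b) - 30*U^2*V*a*b^2 - 20*U^2*V*b^3 + 15*U^2*a^2*b^2 + 40*U^2*a*b^3 + 15*U^2*b^4 + 30*U*V*a^2*b^2 + 80*U*V*a*b^3 + 30*U*V*b^4 - 40*U*a^2*b^3 - 60*U*a*b^4 - 12*U*b^5 - 20*V*a^2*b^3 - 30*V*a*b^4 - 6*V*b^5 + 15*a^2*b^4 + 12*a*b^5 + b^6"
    unfolding root_config_poly_def by (simp add: eval_nat_numeral; algebra)
  have key: "- coeff (root_config_poly 2 6 U V a b) 5 = ((1921525/40768)*w1^3 + (19789541/1732640)*w1^2*w2 + (2415936543/3465280)*w1^2*w3 + (749535/346528)*w1^2*w4 + (543/280)*w1*w2*w4 + (35073/280)*w1*w3^2 + (31401/24752)*w1*w4^2 + (3951/112)*w2*w3^2 + (1473/112)*w2*w3*w4 + (2981/560)*w2*w4^2 + (243/4)*w3^3 + (43578/455)*w3*w4^2 + (22624361/1559376)*w4^3) * ((2*V + U)*a*b - U*V*(2*b + 6*a)) + ((17293725/5096)*w1^6 + (165440517/30940)*w1^5*w2 + (122048471613/1732640)*w1^5*w3 + (3568256891/346528)*w1^5*w4 + (964937859/433160)*w1^4*w2^2 + (154612240071/1732640)*w1^4*w2*w3 + (10989067469/1732640)*w1^4*w2*w4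 + (279426745053/866320)*w1^4*w3^2 + (11690525319/66640)*w1^4*w3*w4 + (4545927/12376)*w1^4*w4^2 + (59368623/216580)*w1^3*w2^3 + (10542044229/433160)*w1^3*w2^2*w3 + (67677557/61880)*w1^3*w2^2*w4 + (231837919587/866320)*w1^3*w2*w3^2 + (7664451663/123760)*w1^3*w2*w3*w4 + (874233431433/1732640)*w1^3*w3^3 + (114766615629/247520)*w1^3*w3^2*w4 + (71843631/86632)*w1^2*w2^3*w3 + (21162643/433160)*w1^2*w2^3*w4 + (4456047249/86632)*w1^2*w2^2*w3^2 + (56283410601/247520)*w1^2*w2*w3^3 + (50048924949/346528)*w1^2*w2*w3^2*w4 + (87848359/99960)*w1^2*w2*w4^3 + (105675627051/433160)*w1^2*w3^4 + (1760633523/6370)*w1^2*w3^3*w4 + (1012544739/15470)*w1^2*w3^2*w4^2 + (2694276551/162435)*w1^2*w3*w4^3 + (1464681245/779688)*w1^2*w4^4 + (8829/14)*w1*w2^3*w3^2 + (960903/56)*w1*w2^2*w3^3 + (568305/221)*w1*w2^2*w3*w4^2 + (85739621/259896)*w1*w2^2*w4^3 + (18183447/280)*w1*w2*w3^4 + (3736773/140)*w1*w2*w3^3*w4 + (1099889253/61880)*w1*w2*w3^2*w4^2 + (2341553273/259896)*w1*w2*w3*w4^3 + (2847541687/3898440)*w1*w2*w4^4 + (3552417/70)*w1*w3^5 + (3401271/70)*w1*w3^4*w4 + (314080659/15470)*w1*w3^3*w4^2 + (2642642993/61880)*w1*w3^2*w4^3 + (6074084069/1299480)*w1*w3*w4^4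 + (766279/129948)*w1*w4^5 + (35073/28)*w2^3*w3^3 + (3735/14)*w2^3*w3*w4^2 + (2619/140)*w2^3*w4^3 + (453195/56)*w2^2*w3^4 + (301671/65)*w2^2*w3^2*w4^2 + (1636966741/1299480)*w2^2*w3*w4^3 + (41993053/974610)*w2^2*w4^4 + (118827/7)*w2*w3^5 + (5739079669/433160)*w2*w3^2*w4^3 + (361921019/259896)*w2*w3*w4^4 + (766279/129948)*w2*w4^5 + 24057*w3^6 + 39366*w3^5*w4 + (8638893/455)*w3^4*w4^2 + (1630554447/108290)*w3^3*w4^3 + (299927339/54145)*w3^2*w4^4 + (12878261/21658)*w3*w4^5 + 35*w4^6)"
    unfolding e5 unfolding eU eV ea eb by algebra
  have lam: "0 < (1921525/40768)*w1^3 + (19789541/1732640)*w1^2*w2 + (2415936543/3465280)*w1^2*w3 + (749535/346528)*w1^2*w4 + (543/280)*w1*w2*w4 + (35073/280)*w1*w3^2 + (31401/24752)*w1*w4^2 + (3951/112)*w2*w3^2 + (1473/112)*w2*w3*w4 + (2981/560)*w2*w4^2 + (243/4)*w3^3 + (43578/455)*w3*w4^2 + (22624361/1559376)*w4^3"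
    by (intro add_pos_pos mult_pos_pos zero_less_power) (simp_all add: w)
  have rest: "0 \<le> (17293725/5096)*w1^6 + (165440517/30940)*w1^5*w2 + (122048471613/1732640)*w1^5*w3 + (3568256891/346528)*w1^5*w4 + (964937859/433160)*w1^4*w2^2 + (154612240071/1732640)*w1^4*w2*w3 + (10989067469/1732640)*w1^4*w2*w4 + (279426745053/866320)*w1^4*w3^2 + (11690525319/66640)*w1^4*w3*w4 + (4545927/12376)*w1^4*w4^2 + (59368623/216580)*w1^3*w2^3 + (10542044229/433160)*w1^3*w2^2*w3 + (67677557/61880)*w1^3*w2^2*w4 + (231837919587/866320)*w1^3*w2*w3^2 + (7664451663/123760)*w1^3*w2*w3*w4 + (874233431433/1732640)*w1^3*w3^3 + (114766615629/247520)*w1^3*w3^2*w4 + (71843631/86632)*w1^2*w2^3*w3 + (21162643/433160)*w1^2*w2^3*w4 + (4456047249/86632)*w1^2*w2^2*w3^2 + (56283410601/247520)*w1^2*w2*w3^3 + (50048924949/346528)*w1^2*w2*w3^2*w4 + (87848359/99960)*w1^2*w2*w4^3 + (105675627051/433160)*w1^2*w3^4 + (1760633523/6370)*w1^2*w3^3*w4 + (1012544739/15470)*w1^2*w3^2*w4^2 + (2694276551/162435)*w1^2*w3*w4^3 + (1464681245/779688)*w1^2*w4^4 + (8829/14)*w1*w2^3*w3^2 + (960903/56)*w1*w2^2*w3^3 + (568305/221)*w1*w2^2*w3*w4^2 + (85739621/259896)*w1*w2^2*w4^3 + (18183447/280)*w1*w2*w3^4 + (3736773/140)*w1*w2*w3^3*w4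 + (1099889253/61880)*w1*w2*w3^2*w4^2 + (2341553273/259896)*w1*w2*w3*w4^3 + (2847541687/3898440)*w1*w2*w4^4 + (3552417/70)*w1*w3^5 + (3401271/70)*w1*w3^4*w4 + (314080659/15470)*w1*w3^3*w4^2 + (2642642993/61880)*w1*w3^2*w4^3 + (6074084069/1299480)*w1*w3*w4^4 + (766279/129948)*w1*w4^5 + (35073/28)*w2^3*w3^3 + (3735/14)*w2^3*w3*w4^2 + (2619/140)*w2^3*w4^3 + (453195/56)*w2^2*w3^4 + (301671/65)*w2^2*w3^2*w4^2 + (1636966741/1299480)*w2^2*w3*w4^3 + (41993053/974610)*w2^2*w4^4 + (118827/7)*w2*w3^5 + (5739079669/433160)*w2*w3^2*w4^3 + (361921019/259896)*w2*w3*w4^4 + (766279/129948)*w2*w4^5 + 24057*w3^6 + 39366*w3^5*w4 + (8638893/455)*w3^4*w4^2 + (1630554447/108290)*w3^3*w4^3 + (299927339/54145)*w3^2*w4^4 + (12878261/21658)*w3*w4^5 + 35*w4^6"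
    by (intro add_nonneg_nonneg mult_nonneg_nonneg zero_le_power) (simp_all add: w less_imp_le)
  have "0 < (2*V + U)*a*b - U*V*(2*b + 6*a)" using harmonic by simp
  then have "0 < - coeff (root_config_poly 2 6 U V a b) 5"
    unfolding key by (rule add_pos_nonneg[OF mult_pos_pos[OF lam] rest])
  then show ?thesis by simp
qed

lemma root_config_3_5_coeff_7_pos:
  fixes U V a b :: real
  assumes "0 < V" "V < U" "0 < a" "0 < b" "3*a + 5*b = 2*U + V"
  shows "0 < coeff (root_config_poly 3 5 U V a b) 7"
proof -
  obtain w1 w2 w3 w4 where w: "0 < w1" "0 < w2" "0 < w3" "0 < w4"
    and ea: "a = 3*w1 + 2*w2" and eb: "b = 3*w3 + 2*w4"
    and eV: "V = 3*w1 + 5*w3" and eU: "U = 3*w1 + 5*w3 + (3*w2 + 5*w4)"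
    by (rule root_config_cone_below[where k=3 and l=5, OF assms(1-4)]) (use assms(5) in simp)
  have e7: "coeff (root_config_poly 3 5 U V a b) 7 = - (3*U^2*V*a) - 5*U^2*V*b + 3*U^2*a^2 + 15*U^2*a*b + 10*U^2*b^2 + 6*U*V*a^2 + 30*U*V*a*b + 20*U*V*b^2 - 2*U*a^3 - 30*U*a^2*b - 60*U*a*b^2 - 20*U*b^3 - V*a^3 - 15*V*a^2*b - 30*V*a*b^2 - 10*V*b^3 + 5*a^3*b + 30*a^2*b^2 + 30*a*b^3 + 5*b^4"
    unfolding root_config_poly_def by (simp add: eval_nat_numeral; algebra)
  have key: "coeff (root_config_poly 3 5 U V a b) 7 = 243*w1^4 + 648*w1^3*w2 + 810*w1^3*w3 + 540*w1^3*w4 + 648*w1^2*w2^2 + 1620*w1^2*w2*w3 + 1080*w1^2*w2*w4 + 1620*w1^2*w3^2 + 2160*w1^2*w3*w4 + 720*w1^2*w4^2 + 306*w1*w2^3 + 945*w1*w2^2*w3 + 720*w1*w2^2*w4 + 2160*w1*w2*w3^2 + 2430*w1*w2*w3*w4 + 810*w1*w2*w4^2 + 1575*w1*w3^3 + 3150*w1*w3^2*w4 + 1725*w1*w3*w4^2 + 300*w1*w4^3 + 60*w2^4 + 180*w2^3*w3 + 180*w2^3*w4 + 675*w2^2*w3^2 + 750*w2^2*w3*w4 + 300*w2^2*w4^2 + 1050*w2*w3^3 + 1950*w2*w3^2*w4 + 1200*w2*w3*w4^2 + 300*w2*w4^3 + 1230*w3^4 + 3280*w3^3*w4 + 3155*w3^2*w4^2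 + 1430*w3*w4^3 + 280*w4^4"
    unfolding e7 unfolding eU eV ea eb by algebra
  show ?thesis unfolding key
    by (intro add_pos_pos mult_pos_pos zero_less_power) (simp_all add: w)
qed

lemma root_config_3_5_coeff_5_neg:
  fixes U V a b :: real
  assumes "0 < U" "U < V" "0 < a" "0 < b" "3*a + 5*b = 2*U + V"
    and harmonic: "U*V*(3*b + 5*a) < (2*V + U)*a*b"
  shows "coeff (root_config_poly 3 5 U V a b) 5 < 0"
proof -
  obtain w1 w2 w3 w4 where w: "0 < w1" "0 < w2" "0 < w3" "0 < w4"
    and ea: "a = 3*w1 + w2" and eb: "b = 3*w3 + w4"
    and eU: "U = 3*w1 + 5*w3" and eV: "V = 3*w1 + 5*w3 + (3*w2 + 5*w4)"
    by (rule root_config_cone_above[where k=3 and l=5, OF assms(1-4)]) (use assms(5) in simp)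
  have e5: "coeff (root_config_poly 3 5 U V a b) 5 = - (U^2*V*a^3) - 15*U^2*V*a^2*b - 30*U^2*V*a*b^2 - 10*U^2*V*b^3 + 5*U^2*a^3*b + 30*U^2*a^2*b^2 + 30*U^2*a*b^3 + 5*U^2*b^4 + 10*U*V*a^3*b + 60*U*V*a^2*b^2 + 60*U*V*a*b^3 + 10*U*V*b^4 - 20*U*a^3*b^2 - 60*U*a^2*b^3 - 30*U*a*b^4 - 2*U*b^5 - 10*V*a^3*b^2 - 30*V*a^2*b^3 - 15*V*a*b^4 - V*b^5 + 10*a^3*b^3 + 15*a^2*b^4 + 3*a*b^5"
    unfolding root_config_poly_def by (simp add: eval_nat_numeral; algebra)
  have key: "- coeff (root_config_poly 3 5 U V a b) 5 = ((27/22)*w1*w2^2 + (852683/604010)*w1*w2*w3 + (3/10)*w1*w2*w4 + (947649/60401)*w1*w3*w4 + (15/2)*w1*w4^2 + (269/110)*w2^2*w3 + (119/55)*w2^2*w4 + (37163/1254)*w2*w3^2 + (10773643/362406)*w2*w3*w4 + (27/2)*w2*w4^2 + 65*w3^3 + (767235/60401)*w3^2*w4 + (1742640/60401)*w3*w4^2 + (15/2)*w4^3) * ((2*V + U)*a*b - U*V*(3*b + 5*a)) + (729*w1^6 + 1458*w1^5*w2 + 3645*w1^5*w3 + 1215*w1^5*w4 + (25029/22)*w1^4*w2^2 + (756894591/120802)*w1^4*w2*w3 + (2511/2)*w1^4*w2*w4 + 2430*w1^4*w3^2 + (225782235/60401)*w1^4*w3*w4 + (1215/2)*w1^4*w4^2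 + (5400/11)*w1^3*w2^3 + (284067801/120802)*w1^3*w2^2*w3 + (4779/22)*w1^3*w2^2*w4 + (951444765/120802)*w1^3*w2*w3^2 + (1809/22)*w1^2*w2^4 + (17452008/60401)*w1^2*w2^3*w3 + (34430265/10982)*w1^2*w2^2*w3^2 + (22005/22)*w1^2*w2^2*w4^2 + (60333399/3553)*w1^2*w2*w3^3 + (275241789/60401)*w1^2*w2*w3*w4^2 + (4509/2)*w1^2*w2*w4^3 + 17910*w1^2*w3^4 + (72605295/5491)*w1^2*w3^3*w4 + (152608050/60401)*w1^2*w3^2*w4^2 + (532658835/120802)*w1^2*w3*w4^3 + 1035*w1^2*w4^4 + (158545578/302005)*w1*w2^3*w3^2 + (11806197/17765)*w1*w2^3*w3*w4 + (4257/10)*w1*w2^3*w4^2 + (682552047/120802)*w1*w2^2*w3^3 + (250221723/120802)*w1*w2^2*w3^2*w4 + (27191301/5491)*w1*w2^2*w3*w4^2 + (11709/11)*w1*w2^2*w4^3 + (3895474555/120802)*w1*w2*w3^4 + (487101660/60401)*w1*w2*w3^3*w4 + (580121970/60401)*w1*w2*w3^2*w4^2 + (79980445/10982)*w1*w2*w3*w4^3 + 780*w1*w2*w4^4 + 31125*w1*w3^5 + (2226277725/60401)*w1*w3^4*w4 + (663201075/120802)*w1*w3^3*w4^2 + (444432375/60401)*w1*w3^2*w4^3 + (157511775/60401)*w1*w3*w4^4 + (375/2)*w1*w4^5 + (3783/110)*w2^4*w3^2 + (7626/55)*w2^4*w3*w4 + (936/55)*w2^4*w4^2 + (31562671/60401)*w2^3*w3^2*w4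 + (103543185/120802)*w2^3*w3*w4^2 + (301/11)*w2^3*w4^3 + (4095485/627)*w2^2*w3^4 + (47745590/60401)*w2^2*w3^3*w4 + (388736035/120802)*w2^2*w3^2*w4^2 + (283924195/181203)*w2^2*w3*w4^3 + (8346625/418)*w2*w3^5 + (1915980075/120802)*w2*w3^4*w4 + (345457250/60401)*w2*w3^3*w4^2 + (306322550/60401)*w2*w3^2*w4^3 + (68645025/60401)*w2*w3*w4^4 + 21645*w3^6 + (2198477415/60401)*w3^5*w4 + (104341200/5491)*w3^4*w4^2 + (1026277025/120802)*w3^3*w4^3 + (179018800/60401)*w3^2*w4^4 + (805/2)*w3*w4^5 + 5*w4^6)"
    unfolding e5 unfolding eU eV ea eb by algebra
  have lam: "0 < (27/22)*w1*w2^2 + (852683/604010)*w1*w2*w3 + (3/10)*w1*w2*w4 + (947649/60401)*w1*w3*w4 + (15/2)*w1*w4^2 + (269/110)*w2^2*w3 + (119/55)*w2^2*w4 + (37163/1254)*w2*w3^2 + (10773643/362406)*w2*w3*w4 + (27/2)*w2*w4^2 + 65*w3^3 + (767235/60401)*w3^2*w4 + (1742640/60401)*w3*w4^2 + (15/2)*w4^3"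
    by (intro add_pos_pos mult_pos_pos zero_less_power) (simp_all add: w)
  have rest: "0 \<le> 729*w1^6 + 1458*w1^5*w2 + 3645*w1^5*w3 + 1215*w1^5*w4 + (25029/22)*w1^4*w2^2 + (756894591/120802)*w1^4*w2*w3 + (2511/2)*w1^4*w2*w4 + 2430*w1^4*w3^2 + (225782235/60401)*w1^4*w3*w4 + (1215/2)*w1^4*w4^2 + (5400/11)*w1^3*w2^3 + (284067801/120802)*w1^3*w2^2*w3 + (4779/22)*w1^3*w2^2*w4 + (951444765/120802)*w1^3*w2*w3^2 + (1809/22)*w1^2*w2^4 + (17452008/60401)*w1^2*w2^3*w3 + (34430265/10982)*w1^2*w2^2*w3^2 + (22005/22)*w1^2*w2^2*w4^2 + (60333399/3553)*w1^2*w2*w3^3 + (275241789/60401)*w1^2*w2*w3*w4^2 + (4509/2)*w1^2*w2*w4^3 + 17910*w1^2*w3^4 + (72605295/5491)*w1^2*w3^3*w4 + (152608050/60401)*w1^2*w3^2*w4^2 + (532658835/120802)*w1^2*w3*w4^3 + 1035*w1^2*w4^4 + (158545578/302005)*w1*w2^3*w3^2 + (11806197/17765)*w1*w2^3*w3*w4 + (4257/10)*w1*w2^3*w4^2 + (682552047/120802)*w1*w2^2*w3^3 + (250221723/120802)*w1*w2^2*w3^2*w4 + (27191301/5491)*w1*w2^2*w3*w4^2 + (11709/11)*w1*w2^2*w4^3 + (3895474555/120802)*w1*w2*w3^4 + (487101660/60401)*w1*w2*w3^3*w4 + (580121970/60401)*w1*w2*w3^2*w4^2 + (79980445/10982)*w1*w2*w3*w4^3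 + 780*w1*w2*w4^4 + 31125*w1*w3^5 + (2226277725/60401)*w1*w3^4*w4 + (663201075/120802)*w1*w3^3*w4^2 + (444432375/60401)*w1*w3^2*w4^3 + (157511775/60401)*w1*w3*w4^4 + (375/2)*w1*w4^5 + (3783/110)*w2^4*w3^2 + (7626/55)*w2^4*w3*w4 + (936/55)*w2^4*w4^2 + (31562671/60401)*w2^3*w3^2*w4 + (103543185/120802)*w2^3*w3*w4^2 + (301/11)*w2^3*w4^3 + (4095485/627)*w2^2*w3^4 + (47745590/60401)*w2^2*w3^3*w4 + (388736035/120802)*w2^2*w3^2*w4^2 + (283924195/181203)*w2^2*w3*w4^3 + (8346625/418)*w2*w3^5 + (1915980075/120802)*w2*w3^4*w4 + (345457250/60401)*w2*w3^3*w4^2 + (306322550/60401)*w2*w3^2*w4^3 + (68645025/60401)*w2*w3*w4^4 + 21645*w3^6 + (2198477415/60401)*w3^5*w4 + (104341200/5491)*w3^4*w4^2 + (1026277025/120802)*w3^3*w4^3 + (179018800/60401)*w3^2*w4^4 + (805/2)*w3*w4^5 + 5*w4^6"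
    by (intro add_nonneg_nonneg mult_nonneg_nonneg zero_le_power) (simp_all add: w less_imp_le)
  have "0 < (2*V + U)*a*b - U*V*(3*b + 5*a)" using harmonic by simp
  then have "0 < - coeff (root_config_poly 3 5 U V a b) 5"
    unfolding key by (rule add_pos_nonneg[OF mult_pos_pos[OF lam] rest])
  then show ?thesis by simp
qed

lemma root_config_4_4_coeff_7_pos:
  fixes U V a b :: real
  assumes "0 < V" "V < U" "0 < a" "0 < b" "4*a + 4*b = 2*U + V"
  shows "0 < coeff (root_config_poly 4 4 U V a b) 7"
proof -
  obtain w1 w2 w3 w4 where w: "0 < w1" "0 < w2" "0 < w3" "0 < w4"
    and ea: "a = 3*w1 + 2*w2" and eb: "b = 3*w3 + 2*w4"
    and eV: "V = 4*w1 + 4*w3" and eU: "U = 4*w1 + 4*w3 + (4*w2 + 4*w4)"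
    by (rule root_config_cone_below[where k=4 and l=4, OF assms(1-4)]) (use assms(5) in simp)
  have e7: "coeff (root_config_poly 4 4 U V a b) 7 = - (4*U^2*V*a) - 4*U^2*V*b + 6*U^2*a^2 + 16*U^2*a*b + 6*U^2*b^2 + 12*U*V*a^2 + 32*U*V*a*b + 12*U*V*b^2 - 8*U*a^3 - 48*U*a^2*b - 48*U*a*b^2 - 8*U*b^3 - 4*V*a^3 - 24*V*a^2*b - 24*V*a*b^2 - 4*V*b^3 + a^4 + 16*a^3*b + 36*a^2*b^2 + 16*a*b^3 + b^4"
    unfolding root_config_poly_def by (simp add: eval_nat_numeral; algebra)
  have key: "coeff (root_config_poly 4 4 U V a b) 7 = 609*w1^4 + 1624*w1^3*w2 + 1248*w1^3*w3 + 832*w1^3*w4 + 1592*w1^2*w2^2 + 2496*w1^2*w2*w3 + 1600*w1^2*w2*w4 + 1764*w1^2*w3^2 + 2352*w1^2*w3*w4 + 752*w1^2*w4^2 + 736*w1*w2^3 + 1408*w1*w2^2*w3 + 1024*w1*w2^2*w4 + 2352*w1*w2*w3^2 + 2624*w1*w2*w3*w4 + 832*w1*w2*w4^2 + 1248*w1*w3^3 + 2496*w1*w3^2*w4 + 1408*w1*w3*w4^2 + 256*w1*w4^3 + 144*w2^4 + 256*w2^3*w3 + 256*w2^3*w4 + 752*w2^2*w3^2 + 832*w2^2*w3*w4 + 320*w2^2*w4^2 + 832*w2*w3^3 + 1600*w2*w3^2*w4 + 1024*w2*w3*w4^2 + 256*w2*w4^3 + 609*w3^4 + 1624*w3^3*w4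 + 1592*w3^2*w4^2 + 736*w3*w4^3 + 144*w4^4"
    unfolding e7 unfolding eU eV ea eb by algebra
  show ?thesis unfolding key
    by (intro add_pos_pos mult_pos_pos zero_less_power) (simp_all add: w)
qed

lemma root_config_4_4_coeff_5_neg:
  fixes U V a b :: real
  assumes "0 < U" "U < V" "0 < a" "0 < b" "4*a + 4*b = 2*U + V"
    and harmonic: "U*V*(4*b + 4*a) < (2*V + U)*a*b"
  shows "coeff (root_config_poly 4 4 U V a b) 5 < 0"
proof -
  obtain w1 w2 w3 w4 where w: "0 < w1" "0 < w2" "0 < w3" "0 < w4"
    and ea: "a = 3*w1 + w2" and eb: "b = 3*w3 + w4"
    and eU: "U = 4*w1 + 4*w3" and eV: "V = 4*w1 + 4*w3 + (4*w2 + 4*w4)"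
    by (rule root_config_cone_above[where k=4 and l=4, OF assms(1-4)]) (use assms(5) in simp)
  have e5: "coeff (root_config_poly 4 4 U V a b) 5 = - (4*U^2*V*a^3) - 24*U^2*V*a^2*b - 24*U^2*V*a*b^2 - 4*U^2*V*b^3 + U^2*a^4 + 16*U^2*a^3*b + 36*U^2*a^2*b^2 + 16*U^2*a*b^3 + U^2*b^4 + 2*U*V*a^4 + 32*U*V*a^3*b + 72*U*V*a^2*b^2 + 32*U*V*a*b^3 + 2*U*V*b^4 - 8*U*a^4*b - 48*U*a^3*b^2 - 48*U*a^2*b^3 - 8*U*a*b^4 - 4*V*a^4*b - 24*V*a^3*b^2 - 24*V*a^2*b^3 - 4*V*a*b^4 + 6*a^4*b^2 + 16*a^3*b^3 + 6*a^2*b^4"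
    unfolding root_config_poly_def by (simp add: eval_nat_numeral; algebra)
  have key: "- coeff (root_config_poly 4 4 U V a b) 5 = ((243/26)*w1^2*w3 + (60/11)*w1*w2^2 + (33/4)*w1*w2*w4 + (1863/416)*w1*w3*w4 + (3489/256)*w1*w4^2 + (1/2)*w2^3 + (5199/572)*w2^2*w3 + (37/4)*w2^2*w4 + (1119933/36608)*w2*w3^2 + (71295/832)*w2*w3*w4 + (51/4)*w2*w4^2 + (1503/32)*w3^3 + (260703/6656)*w3^2*w4 + (1648077/53248)*w3*w4^2 + (1/2)*w4^3) * ((2*V + U)*a*b - U*V*(4*b + 4*a)) + (3024*w1^6 + 6048*w1^5*w2 + (73872/13)*w1^5*w3 + 1296*w1^5*w4 + (46368/11)*w1^4*w2^2 + (115344/13)*w1^4*w2*w3 + (1035/4)*w1^4*w4^2 + (19232/11)*w1^3*w2^3 + (2183679/572)*w1^3*w2*w3^2 + (2455/64)*w1^3*w4^3 + (3312/11)*w1^2*w2^4 + (786/13)*w1^2*w2^3*w3 + (10778/11)*w1^2*w2^3*w4 + (2114973/143)*w1^2*w2^2*w3*w4 + (118643/44)*w1^2*w2^2*w4^2 + (137330145/9152)*w1^2*w2*w3^3 + (21471381/832)*w1^2*w2*w3^2*w4 + (17743905/832)*w1^2*w2*w3*w4^2 + (118071/64)*w1^2*w2*w4^3 + (2017791/104)*w1^2*w3^4 + (45460971/1664)*w1^2*w3^3*w4 + (224650377/13312)*w1^2*w3^2*w4^2 + (94361115/13312)*w1^2*w3*w4^3 + (8997/32)*w1^2*w4^4 +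 (31158/143)*w1*w2^4*w3 + (3194/11)*w1*w2^4*w4 + (814497/572)*w1*w2^3*w3^2 + (1048369/143)*w1*w2^3*w3*w4 + (13039/11)*w1*w2^3*w4^2 + (63939537/9152)*w1*w2^2*w3^3 + (281332503/9152)*w1*w2^2*w3^2*w4 + (133961761/9152)*w1*w2^2*w3*w4^2 + (42239/32)*w1*w2^2*w4^3 + (21385197/704)*w1*w2*w3^4 + (967496787/18304)*w1*w2*w3^3*w4 + (6474627891/146432)*w1*w2*w3^2*w4^2 + (127983771/13312)*w1*w2*w3*w4^3 + (17247/32)*w1*w2*w4^4 + (206955/8)*w1*w3^5 + (74290779/1664)*w1*w3^4*w4 + (413403273/13312)*w1*w3^3*w4^2 + (178068369/13312)*w1*w3^2*w4^3 + (10172289/6656)*w1*w3*w4^4 + 36*w1*w4^5 + 36*w2^5*w3 + 12*w2^5*w4 + (14238/143)*w2^4*w3^2 + (62246/143)*w2^4*w3*w4 + 28*w2^4*w4^2 + (1204945/4576)*w2^3*w3^3 + (16062247/4576)*w2^3*w3^2*w4 + (634643/1144)*w2^3*w3*w4^2 + (73181547/9152)*w2^2*w3^4 + (5493591/286)*w2^2*w3^3*w4 + (722366707/73216)*w2^2*w3^2*w4^2 + (3060851/6656)*w2^2*w3*w4^3 + (20023317/1144)*w2*w3^5 + (652327155/18304)*w2*w3^4*w4 + (4582117521/146432)*w2*w3^3*w4^2 + (118002555/13312)*w2*w3^2*w4^3 + (2065971/6656)*w2*w3*w4^4 + 12*w2*w4^5 + 12042*w3^6 + (2661597/104)*w3^5*w4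 + (18423495/832)*w3^4*w4^2 + (2242699/208)*w3^3*w4^3 + (1608141/832)*w3^2*w4^4)"
    unfolding e5 unfolding eU eV ea eb by algebra
  have lam: "0 < (243/26)*w1^2*w3 + (60/11)*w1*w2^2 + (33/4)*w1*w2*w4 + (1863/416)*w1*w3*w4 + (3489/256)*w1*w4^2 + (1/2)*w2^3 + (5199/572)*w2^2*w3 + (37/4)*w2^2*w4 + (1119933/36608)*w2*w3^2 + (71295/832)*w2*w3*w4 + (51/4)*w2*w4^2 + (1503/32)*w3^3 + (260703/6656)*w3^2*w4 + (1648077/53248)*w3*w4^2 + (1/2)*w4^3"
    by (intro add_pos_pos mult_pos_pos zero_less_power) (simp_all add: w)
  have rest: "0 \<le> 3024*w1^6 + 6048*w1^5*w2 + (73872/13)*w1^5*w3 + 1296*w1^5*w4 + (46368/11)*w1^4*w2^2 + (115344/13)*w1^4*w2*w3 + (1035/4)*w1^4*w4^2 + (19232/11)*w1^3*w2^3 + (2183679/572)*w1^3*w2*w3^2 + (2455/64)*w1^3*w4^3 + (3312/11)*w1^2*w2^4 + (786/13)*w1^2*w2^3*w3 + (10778/11)*w1^2*w2^3*w4 + (2114973/143)*w1^2*w2^2*w3*w4 + (118643/44)*w1^2*w2^2*w4^2 + (137330145/9152)*w1^2*w2*w3^3 + (21471381/832)*w1^2*w2*w3^2*w4 + (17743905/832)*w1^2*w2*w3*w4^2 + (118071/64)*w1^2*w2*w4^3 + (2017791/104)*w1^2*w3^4 + (45460971/1664)*w1^2*w3^3*w4 + (224650377/13312)*w1^2*w3^2*w4^2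 + (94361115/13312)*w1^2*w3*w4^3 + (8997/32)*w1^2*w4^4 + (31158/143)*w1*w2^4*w3 + (3194/11)*w1*w2^4*w4 + (814497/572)*w1*w2^3*w3^2 + (1048369/143)*w1*w2^3*w3*w4 + (13039/11)*w1*w2^3*w4^2 + (63939537/9152)*w1*w2^2*w3^3 + (281332503/9152)*w1*w2^2*w3^2*w4 + (133961761/9152)*w1*w2^2*w3*w4^2 + (42239/32)*w1*w2^2*w4^3 + (21385197/704)*w1*w2*w3^4 + (967496787/18304)*w1*w2*w3^3*w4 + (6474627891/146432)*w1*w2*w3^2*w4^2 + (127983771/13312)*w1*w2*w3*w4^3 + (17247/32)*w1*w2*w4^4 + (206955/8)*w1*w3^5 + (74290779/1664)*w1*w3^4*w4 + (413403273/13312)*w1*w3^3*w4^2 + (178068369/13312)*w1*w3^2*w4^3 + (10172289/6656)*w1*w3*w4^4 + 36*w1*w4^5 + 36*w2^5*w3 + 12*w2^5*w4 + (14238/143)*w2^4*w3^2 + (62246/143)*w2^4*w3*w4 + 28*w2^4*w4^2 + (1204945/4576)*w2^3*w3^3 + (16062247/4576)*w2^3*w3^2*w4 + (634643/1144)*w2^3*w3*w4^2 + (73181547/9152)*w2^2*w3^4 + (5493591/286)*w2^2*w3^3*w4 + (722366707/73216)*w2^2*w3^2*w4^2 + (3060851/6656)*w2^2*w3*w4^3 + (20023317/1144)*w2*w3^5 + (652327155/18304)*w2*w3^4*w4 + (4582117521/146432)*w2*w3^3*w4^2 + (118002555/13312)*w2*w3^2*w4^3 + (2065971/6656)*w2*w3*w4^4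 + 12*w2*w4^5 + 12042*w3^6 + (2661597/104)*w3^5*w4 + (18423495/832)*w3^4*w4^2 + (2242699/208)*w3^3*w4^3 + (1608141/832)*w3^2*w4^4"
    by (intro add_nonneg_nonneg mult_nonneg_nonneg zero_le_power) (simp_all add: w less_imp_le)
  have "0 < (2*V + U)*a*b - U*V*(4*b + 4*a)" using harmonic by simp
  then have "0 < - coeff (root_config_poly 4 4 U V a b) 5"
    unfolding key by (rule add_pos_nonneg[OF mult_pos_pos[OF lam] rest])
  then show ?thesis by simp
qed

lemma weighted_sum_product_ge:
  fixes k l a b :: real
  assumes "0 \<le> k" "0 \<le> l"
  shows "(k + l)^2 * (a*b) \<le> (k*a + l*b) * (k*b + l*a)"
proof -
  have "(k*a + l*b) * (k*b + l*a) = (k + l)^2 * (a*b) + k*l*(a - b)^2"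
    by (simp add: power2_eq_square algebra_simps)
  moreover have "0 \<le> k*l*(a - b)^2" using assms by simp
  ultimately show ?thesis by linarith
qed

lemma triple_root_violates_harmonic_bound:
  fixes k l :: nat and U a b :: real
  assumes "k + l = 8" "0 < a" "0 < b"
    and sum: "real k * a + real l * b = 3*U"
    and harmonic: "U*(real k * b + real l * a) < 3*(a*b)"
  shows False
proof -
  have "64*(a*b) \<le> (real k * a + real l * b) * (real k * b + real l * a)"
    using weighted_sum_product_ge[of "real k" "real l" a b] assms(1)
    by (simp add: of_nat_add[symmetric] del: of_nat_add)
  also have "\<dots> = 3*(U*(real k * b + real l * a))" unfolding sum by (rule mult.assoc)
  also have "\<dots> < 9*(a*b)" using harmonic by linarith
  finally show False using \<open>0 < a\<close> \<open>0 < b\<close> by simp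
qed

lemma root_config_coeff_7_pos:
  fixes k l :: nat and U V a b :: real
  assumes "k + l = 8" "1 \<le> k" "k \<le> l" "0 < V" "V < U" "0 < a" "0 < b"
    and "real k * a + real l * b = 2*U + V"
    and "U*V*(real k * b + real l * a) < (2*V + U)*a*b"
  shows "0 < coeff (root_config_poly k l U V a b) 7"
proof -
  from assms(1-3) consider "k = 1" "l = 7" | "k = 2" "l = 6" | "k = 3" "l = 5" | "k = 4" "l = 4"
    by force
  then show ?thesis
  proof cases
    case 1
    have sum: "a + 7*b = 2*U + V" using assms(8) 1 by simp
    have "U*V*(b + 7*a) < (2*V + U)*a*b" using assms(9) 1 by simp
    from root_config_1_7_coeff_7_pos[OF assms(4-7) sum this] show ?thesis using 1 by simp
  next
    case 2
    have "2*a + 6*b = 2*U + V" using assms(8) 2 by simp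
    from root_config_2_6_coeff_7_pos[OF assms(4-7) this] show ?thesis using 2 by simp
  next
    case 3
    have "3*a + 5*b = 2*U + V" using assms(8) 3 by simp
    from root_config_3_5_coeff_7_pos[OF assms(4-7) this] show ?thesis using 3 by simp
  next
    case 4
    have "4*a + 4*b = 2*U + V" using assms(8) 4 by simp
    from root_config_4_4_coeff_7_pos[OF assms(4-7) this] show ?thesis using 4 by simp
  qed
qed

lemma root_config_coeff_5_neg:
  fixes k l :: nat and U V a b :: real
  assumes "k + l = 8" "1 \<le> k" "k \<le> l" "0 < U" "U < V" "0 < a" "0 < b"
    and "real k * a + real l * b = 2*U + V"
    and "U*V*(real k * b + real l * a) < (2*V + U)*a*b"
  shows "coeff (root_config_poly k l U V a b) 5 < 0"
proof -
  from assms(1-3) consider "k = 1" "l = 7" | "k = 2" "l = 6" | "k = 3" "l = 5" | "k = 4" "l = 4"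
    by force
  then show ?thesis
  proof cases
    case 1
    have sum: "a + 7*b = 2*U + V" using assms(8) 1 by simp
    have "U*V*(b + 7*a) < (2*V + U)*a*b" using assms(9) 1 by simp
    from root_config_1_7_coeff_5_neg[OF assms(4-7) sum this] show ?thesis using 1 by simp
  next
    case 2
    have sum: "2*a + 6*b = 2*U + V" using assms(8) 2 by simp
    have "U*V*(2*b + 6*a) < (2*V + U)*a*b" using assms(9) 2 by simp
    from root_config_2_6_coeff_5_neg[OF assms(4-7) sum this] show ?thesis using 2 by simp
  next
    case 3
    have sum: "3*a + 5*b = 2*U + V" using assms(8) 3 by simp
    have "U*V*(3*b + 5*a) < (2*V + U)*a*b" using assms(9) 3 by simp
    from root_config_3_5_coeff_5_neg[OF assms(4-7) sum this] show ?thesis using 3 by simp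
  next
    case 4
    have sum: "4*a + 4*b = 2*U + V" using assms(8) 4 by simp
    have "U*V*(4*b + 4*a) < (2*V + U)*a*b" using assms(9) 4 by simp
    from root_config_4_4_coeff_5_neg[OF assms(4-7) sum this] show ?thesis using 4 by simp
  qed
qed

lemma root_config_sign_pattern_impossible_ordered:
  fixes k l :: nat and U V a b :: real
  assumes kl: "k + l = 8" "1 \<le> k" "k \<le> l" and pos: "0 < U" "0 < V" "0 < a" "0 < b"
    and "coeff (root_config_poly k l U V a b) 10 = 0"
    and "0 < coeff (root_config_poly k l U V a b) 1"
    and "coeff (root_config_poly k l U V a b) 7 \<le> 0"
    and "0 \<le> coeff (root_config_poly k l U V a b) 5"
  shows False
proof -
  have sum: "real k * a + real l * b = 2*U + V"
    using assms(8) root_config_coeff_10[OF kl(1)] by simp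
  have "0 < U * a^(k-1) * b^(l-1) * ((2*V + U)*a*b - U*V*(real k * b + real l * a))"
    using assms(9) root_config_coeff_1[of k l] kl by simp
  moreover have "0 < U * a^(k-1) * b^(l-1)" using pos by simp
  ultimately have "0 < (2*V + U)*a*b - U*V*(real k * b + real l * a)"
    by (rule zero_less_mult_pos)
  then have harmonic: "U*V*(real k * b + real l * a) < (2*V + U)*a*b" by simp
  consider "V < U" | "U < V" | "U = V" by linarith
  then show False
  proof cases
    case 1
    show False
      using root_config_coeff_7_pos[OF kl pos(2) 1 pos(3,4) sum harmonic] assms(10) by linarith
  next
    case 2
    show False
      using root_config_coeff_5_neg[OF kl pos(1) 2 pos(3,4) sum harmonic] assms(11) by linarith
  next
    case 3
    have "real k * a + real l * b = 3*U" using sum 3 by linarith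
    moreover have "U*(real k * b + real l * a) < 3*(a*b)"
    proof -
      have "U*(U*(real k * b + real l * a)) < U*(3*(a*b))"
        using harmonic 3 by (simp add: mult.assoc algebra_simps)
      then show ?thesis using pos(1) by simp
    qed
    ultimately show False by (rule triple_root_violates_harmonic_bound[OF kl(1) pos(3,4)])
  qed
qed

lemma root_config_sign_pattern_impossible:
  fixes k l :: nat and U V a b :: real
  assumes "k + l = 8" "1 \<le> k" "1 \<le> l" "0 < U" "0 < V" "0 < a" "0 < b"
    and "coeff (root_config_poly k l U V a b) 10 = 0"
    and "0 < coeff (root_config_poly k l U V a b) 1"
    and "coeff (root_config_poly k l U V a b) 7 \<le> 0"
    and "0 \<le> coeff (root_config_poly k l U V a b) 5"
  shows False
proof (cases "k \<le> l")
  case True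
  show False by (rule root_config_sign_pattern_impossible_ordered[OF assms(1,2) True assms(4-)])
next
  case False
  have "l + k = 8" "l \<le> k" using assms(1) False by simp_all
  note swap = root_config_poly_swap[of k l U V a b]
  show False
    by (rule root_config_sign_pattern_impossible_ordered[OF \<open>l + k = 8\<close> assms(3) \<open>l \<le> k\<close>
          assms(4,5,7,6) assms(8-11)[unfolded swap]])
qed

lemma reflect_poly_root_pattern:
  fixes u v s t :: real
  assumes "u \<noteq> 0" "v \<noteq> 0" "s \<noteq> 0" "t \<noteq> 0"
  shows "reflect_poly ([:-u,1:]^2 * [:-v,1:] * [:-s,1:]^k * [:-t,1:]^l)
    = smult ((-u)^2 * (-v) * (-s)^k * (-t)^l)
        (root_config_poly k l (inverse u) (inverse v) (- inverse s) (- inverse t))"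
  unfolding root_config_poly_def
  by (simp only: reflect_poly_mult reflect_poly_linear[OF assms(2)]
      reflect_poly_linear_power[OF assms(1)] reflect_poly_linear_power[OF assms(3)]
      reflect_poly_linear_power[OF assms(4)] mult_smult_left mult_smult_right smult_smult mult.assoc)
    (simp only: mult_ac)

lemma root_pattern_excludes_coeff_signs:
  fixes p :: "real poly" and u v s t :: real
  assumes deg: "degree p = 11" and monic: "lead_coeff p = 1"
    and "0 < u" "0 < v" "u \<noteq> v" "order u p = 2" "order v p = 1"
    and "s < 0" "t < 0" "s \<noteq> t" "poly p s = 0" "poly p t = 0" "order s p + order t p = 8"
    and "coeff p 1 = 0" "coeff p 10 < 0" "0 \<le> coeff p 4" "coeff p 6 \<le> 0"
  shows False
proof -
  define k l where "k = order s p" and "l = order t p"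
  define c where "c = (-u)^2 * (-v) * (-s)^k * (-t)^l"
  define Q where "Q = root_config_poly k l (inverse u) (inverse v) (- inverse s) (- inverse t)"
  have "p \<noteq> 0" using monic by auto
  then have "1 \<le> k" "1 \<le> l" using assms(11,12) by (simp_all add: k_def l_def Suc_le_eq order_gt_0_iff)
  have distinct: "u \<notin> {v,s,t}" "v \<notin> {s,t}" "s \<noteq> t" using assms by auto
  have "p = (\<Prod>x\<in>{u,v,s,t}. [:-x,1:]^order x p)"
    by (rule monic_poly_eq_prod_linear_powers) (use assms distinct in auto)
  also have "\<dots> = [:-u,1:]^order u p * ([:-v,1:]^order v p * ([:-s,1:]^k * [:-t,1:]^l))"
    using distinct by (simp add: k_def l_def)
  also have "\<dots> = [:-u,1:]^2 * [:-v,1:] * [:-s,1:]^k * [:-t,1:]^l"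
    by (simp only: assms(6,7) power_one_right mult.assoc)
  finally have factors: "p = [:-u,1:]^2 * [:-v,1:] * [:-s,1:]^k * [:-t,1:]^l" .
  have "reflect_poly p = smult c Q"
    unfolding factors c_def Q_def by (rule reflect_poly_root_pattern) (use assms in auto)
  then have coeff_p: "coeff p (11 - j) = c * coeff Q j" if "j \<le> 11" for j
    using coeff_reflect_poly[of p j] that deg by simp
  have "c < 0" unfolding c_def using assms by (simp add: mult_pos_neg zero_less_mult_iff)
  then have "coeff Q 10 = 0" "0 < coeff Q 1" "coeff Q 7 \<le> 0" "0 \<le> coeff Q 5"
    using coeff_p[of 10] coeff_p[of 1] coeff_p[of 7] coeff_p[of 5] assms(14-17)
    by (simp_all add: mult_less_0_iff zero_le_mult_iff mult_le_0_iff)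
  moreover have "k + l = 8" using assms(13) by (simp add: k_def l_def)
  ultimately show False
    using root_config_sign_pattern_impossible[of k l "inverse u" "inverse v" "- inverse s" "- inverse t",
        folded Q_def] \<open>1 \<le> k\<close> \<open>1 \<le> l\<close> assms(3,4,8,9)
    by simp
qed

lemma closure_Tset_coef_nonneg:
  assumes "a \<in> closure Tset" "j \<in> {1..5}"
  shows "0 \<le> coef a j"
proof -
  have "closed {a::real^10. 0 \<le> coef a j}"
    unfolding coef_def by (intro closed_Collect_le continuous_intros)
  moreover have "Tset \<subseteq> {a. 0 \<le> coef a j}"
    using assms(2) unfolding Tset_def by (auto intro: less_imp_le)
  ultimately show ?thesis using assms(1) closure_minimal by blast
qed

lemma closure_Tset_coef_nonpos:
  assumes "a \<in> closure Tset" "j \<in> {6..9}"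
  shows "coef a j \<le> 0"
proof -
  have "closed {a::real^10. coef a j \<le> 0}"
    unfolding coef_def by (intro closed_Collect_le continuous_intros)
  moreover have "j = 6 \<or> j = 7 \<or> j = 8 \<or> j = 9" using assms(2) by auto
  then have "Tset \<subseteq> {a. coef a j \<le> 0}" unfolding Tset_def by auto
  ultimately show ?thesis using assms(1) closure_minimal by blast
qed

lemma coeff_Pa:
  "coeff (Pa a) j = (if j = 11 then 1 else if j = 10 then -1 else if j < 10 then coef a j else 0)"
  unfolding Pa_def by (auto simp: coeff_sum)

lemma degree_Pa: "degree (Pa a) = 11"
  by (rule antisym) (auto intro: degree_le le_degree simp: coeff_Pa)

lemma lead_coeff_Pa: "lead_coeff (Pa a) = 1"
  by (simp add: degree_Pa coeff_Pa)

lemma closure_Tset_excludes_root_pattern: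
  assumes "a \<in> closure Tset" "coef a 1 = 0"
    and uv: "0 < u" "0 < v" "u \<noteq> v" "order u (Pa a) = 2" "order v (Pa a) = 1"
    and st: "s < 0" "t < 0" "s \<noteq> t" "{x. x < 0 \<and> poly (Pa a) x = 0} = {s, t}"
      "order s (Pa a) + order t (Pa a) = 8"
  shows False
proof -
  have "s \<in> {x. x < 0 \<and> poly (Pa a) x = 0}" "t \<in> {x. x < 0 \<and> poly (Pa a) x = 0}"
    using st(4) by simp_all
  then have roots: "poly (Pa a) s = 0" "poly (Pa a) t = 0" by simp_all
  have "0 \<le> coef a 4" "coef a 6 \<le> 0"
    using assms(1) by (simp_all add: closure_Tset_coef_nonneg closure_Tset_coef_nonpos)
  then show False
    using root_pattern_excludes_coeff_signs[OF degree_Pa lead_coeff_Pa uv st(1-3) roots st(5)] assms(2)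
    by (auto simp: coeff_Pa)
qed

theorem lemma13:
  fixes \<Gamma> :: "(real^10) set"
  assumes "Tset \<noteq> {}"
    and "\<Gamma> \<in> components Tset"
  shows "\<not> (\<exists>a \<in> closure \<Gamma>. all_roots_real (Pa a)
            \<and> (\<exists>u v. u > 0 \<and> v > 0 \<and> u \<noteq> v
                   \<and> poly (Pa a) u = 0 \<and> order u (Pa a) = 2
                   \<and> poly (Pa a) v = 0 \<and> order v (Pa a) = 1)
            \<and> (\<exists>s t. s < 0 \<and> t < 0 \<and> s \<noteq> t
                   \<and> {x::real. x < 0 \<and> poly (Pa a) x = 0} = {s, t}
                   \<and> order s (Pa a) + order t (Pa a) = 8)
            \<and> ((coef a 1 = 0 \<and> coef a 5 = 0) \<or> (coef a 1 = 0 \<and> coef a 6 = 0)))"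
proof -
  have "closure \<Gamma> \<subseteq> closure Tset"
    by (rule closure_mono[OF in_components_subset[OF assms(2)]])
  then show ?thesis using closure_Tset_excludes_root_pattern by blast
qed

end
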